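(* As formal power series in $x$, $$F(u,1,x):=\sum_{n\ge1}\frac{x^n}{n!}\sum_{p=1}^n\sum_{\pi\in\mathfrak S_n}u^{\chi_n(\pi,p)}=\frac{u}{2-u}\Bigl[(1-x)^{-2}-(1-x)^{-u}\Bigr],$$ and $$G(u,x):=\sum_{n\ge1}\frac{x^n}{n!}\sum_{\pi\in\mathfrak S_n}u^{\chi_n(\pi,n)}=\frac{u^2}{2-u}\Bigl[\frac1{1-x}+\frac{(1-x)^{1-u}}{1-u}\Bigr]-\frac{u^2}{1-u}-u\log(1-x).$$
   Context: $[n]=\{1,\dots,n\}$, $\mathfrak S_n$ the symmetric group on $[n]$, right action $i\pi$, products composed left to right; $\tau(i,j)$ the transposition exchanging $i,j$ ($\tau(n,n)$ the identity). For $\pi\in\mathfrak S_n$ let $q(\pi)=n\pi^{-1}$, and for $n\ge2$ let $\downarrow\pi\in\mathfrak S_{n-1}$ be the restriction to $[n-1]$ of $\tau(n,q(\pi))\pi$. The "number of moves" function $\chi_n(\pi,p)$, $\pi\in\mathfrak S_n$, $p\in[n]$, is defined recursively: $\chi_1(\mathrm{id},1)=1$; for $n\ge2$, with $q=q(\pi)$: $\chi_n(\pi,p)=\chi_{n-1}(\downarrow\pi,p)$ if $p\ne n,p\ne q$; $=1+\chi_{n-1}(\downarrow\pi,q)$ if $p=n\ne q$; $=1$ if $p=q\ne n$; $=1$ if $p=q=n$. Coefficients are rational functions of $u$; $(1-x)^{-u}$ and $(1-x)^{1-u}$ denote the binomial series. *)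

theory Defs
  imports "HOL-Combinatorics.Combinatorics" "HOL-Computational_Algebra.Formal_Power_Series"
begin

text \<open>Permutations of [n] are functions nat to nat that permute {1..n}.
 Right action: i\<pi> is written pi i; the left-to-right product tau pi maps i to pi (tau i),
 i.e. the function pi o tau.\<close>

definition qpos :: "nat \<Rightarrow> (nat \<Rightarrow> nat) \<Rightarrow> nat" where
  "qpos n \<pi> = inv \<pi> n"

definition down :: "nat \<Rightarrow> (nat \<Rightarrow> nat) \<Rightarrow> (nat \<Rightarrow> nat)" where
  "down n \<pi> = \<pi> \<circ> Transposition.transpose n (qpos n \<pi>)"

fun chi :: "nat \<Rightarrow> (nat \<Rightarrow> nat) \<Rightarrow> nat \<Rightarrow> nat" where
  "chi 0 \<pi> p = 1"
| "chi (Suc 0) \<pi> p = 1"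
| "chi (Suc (Suc m)) \<pi> p =
     (let n = Suc (Suc m); q = qpos n \<pi>; d = down n \<pi> in
      if p \<noteq> n \<and> p \<noteq> q then chi (Suc m) d p
      else if p = n \<and> p \<noteq> q then 1 + chi (Suc m) d q
      else 1)"

definition perms :: "nat \<Rightarrow> (nat \<Rightarrow> nat) set" where
  "perms n = {\<pi>. \<pi> permutes {1..n}}"

definition binser :: "'a::field_char_0 \<Rightarrow> 'a fps" where
  "binser a = fps_binomial a oo (- fps_X)"

definition Fser :: "'a::field_char_0 \<Rightarrow> 'a fps" where
  "Fser u = Abs_fps (\<lambda>n. if n = 0 then 0 else
     (\<Sum>p\<in>{1..n}. \<Sum>\<pi>\<in>perms n. u ^ chi n \<pi> p) / fact n)"

definition Gser :: "'a::field_char_0 \<Rightarrow> 'a fps" where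
  "Gser u = Abs_fps (\<lambda>n. if n = 0 then 0 else
     (\<Sum>\<pi>\<in>perms n. u ^ chi n \<pi> n) / fact n)"

end

theory Submission
  imports Defs
begin

(* Every \<pi> in S_(n+1) is uniquely \<sigma> \<circ> \<tau>(n+1, b) with b = q(\<pi>) in [n+1] and \<sigma> = down \<pi> in S_n, and
   then chi_(n+1)(\<pi>, p) is 1 if p = b, 1 + chi_n(\<sigma>, b) if p = n+1 \<noteq> b, and chi_n(\<sigma>, p) otherwise.
   Summing u^chi over this decomposition, A_n(p) = \<Sum>\<pi> u^chi_n(\<pi>, p) (moves_sum) and
   B_n = \<Sum>p A_n(p) (moves_total) satisfy
     A_(n+1)(p) = u n! + n A_n(p) for p \<le> n,   A_(n+1)(n+1) = u (n! + B_n),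
   hence B_(n+1) = (n + u) B_n + u (n+1)!,
   so B_n = u/(2-u) ((n+1)! - u^(n)) with the rising factorial u^(n).  Since the n-th coefficient of
   (1-x)^(-a) is a^(n)/n!, both identities follow by comparing coefficients. *)

lemma binser_nth: "fps_nth (binser a) n = pochhammer (- a) n / fact n"
  unfolding binser_def fps_compose_uminus'
  by (simp add: gbinomial_pochhammer power_mult_distrib[symmetric])

lemma ln_one_minus_X_nth:
  "fps_nth (fps_ln 1 oo - fps_X :: 'a::field_char_0 fps) n = (if n = 0 then 0 else - 1 / of_nat n)"
  by (cases n) (simp_all add: fps_compose_uminus' fps_ln_nth)

lemma pochhammer_two: "pochhammer 2 n = (fact (Suc n) :: 'a::{comm_semiring_1,semiring_char_0})"
  by (simp add: pochhammer_fact pochhammer_rec one_add_one)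

lemma card_perms: "card (perms n) = fact n"
  unfolding perms_def by (rule card_permutations) auto

lemma sum_perms_Suc:
  "(\<Sum>\<pi>\<in>perms (Suc n). f \<pi>) = (\<Sum>b\<in>{1..Suc n}. \<Sum>\<sigma>\<in>perms n. f (\<sigma> \<circ> transpose (Suc n) b))"
proof -
  have insert_top: "{1..Suc n} = insert (Suc n) {1..n}"
    by auto
  have "(\<Sum>\<pi>\<in>perms (Suc n). f \<pi>) = (\<Sum>\<pi>\<in>perms (Suc n). f (inv \<pi>))"
    unfolding perms_def by (rule sum_permutations_inverse)
  also have "\<dots> = (\<Sum>b\<in>{1..Suc n}. \<Sum>\<sigma>\<in>perms n. f (inv (transpose (Suc n) b \<circ> \<sigma>)))"
    unfolding perms_def insert_top by (rule sum_over_permutations_insert) auto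
  also have "\<dots> = (\<Sum>b\<in>{1..Suc n}. \<Sum>\<sigma>\<in>perms n. f (inv \<sigma> \<circ> transpose (Suc n) b))"
    unfolding perms_def by (intro sum.cong refl) (simp add: o_inv_distrib permutes_bij)
  also have "\<dots> = (\<Sum>b\<in>{1..Suc n}. \<Sum>\<sigma>\<in>perms n. f (\<sigma> \<circ> transpose (Suc n) b))"
    unfolding perms_def by (rule sum.cong[OF refl]) (rule sum_permutations_inverse[symmetric])
  finally show ?thesis .
qed

lemma
  assumes "\<sigma> \<in> perms n" "b \<in> {1..Suc n}"
  shows qpos_comp_transpose: "qpos (Suc n) (\<sigma> \<circ> transpose (Suc n) b) = b"
    and down_comp_transpose: "down (Suc n) (\<sigma> \<circ> transpose (Suc n) b) = \<sigma>"
proof -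
  have \<sigma>: "\<sigma> permutes {1..n}"
    using assms(1) unfolding perms_def by simp
  have "bij (\<sigma> \<circ> transpose (Suc n) b)"
    using permutes_bij[OF \<sigma>] by (simp add: bij_comp)
  moreover have "(\<sigma> \<circ> transpose (Suc n) b) b = Suc n"
    using permutes_not_in[OF \<sigma>, of "Suc n"] by simp
  ultimately show q: "qpos (Suc n) (\<sigma> \<circ> transpose (Suc n) b) = b"
    unfolding qpos_def by (metis bij_is_inj inv_f_eq)
  show "down (Suc n) (\<sigma> \<circ> transpose (Suc n) b) = \<sigma>"
    unfolding down_def q by (simp add: comp_assoc)
qed

lemma chi_comp_transpose:
  assumes "\<sigma> \<in> perms (Suc n)" "b \<in> {1..Suc (Suc n)}"
  shows "chi (Suc (Suc n)) (\<sigma> \<circ> transpose (Suc (Suc n)) b) p =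
    (if b = p then 1 else if p = Suc (Suc n) then 1 + chi (Suc n) \<sigma> b else chi (Suc n) \<sigma> p)"
  using qpos_comp_transpose[OF assms] down_comp_transpose[OF assms] by (auto simp: Let_def)

definition moves_sum :: "'a::comm_semiring_1 \<Rightarrow> nat \<Rightarrow> nat \<Rightarrow> 'a" where
  "moves_sum u n p = (\<Sum>\<pi>\<in>perms n. u ^ chi n \<pi> p)"

definition moves_total :: "'a::comm_semiring_1 \<Rightarrow> nat \<Rightarrow> 'a" where
  "moves_total u n = (\<Sum>p\<in>{1..n}. moves_sum u n p)"

context
  fixes u :: "'a::{comm_semiring_1,semiring_char_0}"
begin

lemma moves_sum_comp_transpose:
  assumes "b \<in> {1..Suc (Suc n)}"
  shows "(\<Sum>\<sigma>\<in>perms (Suc n). u ^ chi (Suc (Suc n)) (\<sigma> \<circ> transpose (Suc (Suc n)) b) p) =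
    (if b = p then u * fact (Suc n)
     else if p = Suc (Suc n) then u * moves_sum u (Suc n) b else moves_sum u (Suc n) p)"
  using assms by (simp add: chi_comp_transpose moves_sum_def card_perms sum_distrib_left mult.commute
      del: chi.simps fact_Suc)

lemma moves_sum_Suc:
  assumes "p \<in> {1..n}"
  shows "moves_sum u (Suc n) p = u * fact n + of_nat n * moves_sum u n p"
proof -
  obtain m where n: "n = Suc m"
    using assms by (cases n) auto
  have "moves_sum u (Suc n) p =
      (\<Sum>b\<in>{1..Suc n}. \<Sum>\<sigma>\<in>perms n. u ^ chi (Suc n) (\<sigma> \<circ> transpose (Suc n) b) p)"
    unfolding moves_sum_def by (rule sum_perms_Suc)
  also have "\<dots> = (\<Sum>b\<in>{1..Suc n}. if b = p then u * fact n else moves_sum u n p)"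
    using assms by (intro sum.cong refl) (simp add: n moves_sum_comp_transpose del: chi.simps fact_Suc)
  also have "\<dots> = u * fact n + of_nat n * moves_sum u n p"
  proof -
    have "p \<in> {1..Suc n}" "card ({1..Suc n} - {p}) = n"
      using assms by auto
    then show ?thesis
      by (simp only: sum.delta_remove finite_atLeastAtMost sum_constant if_True)
  qed
  finally show ?thesis .
qed

lemma moves_sum_Suc_top: "moves_sum u (Suc n) (Suc n) = u * fact n + u * moves_total u n"
proof (cases n)
  case 0
  then show ?thesis
    by (simp add: moves_sum_def moves_total_def card_perms)
next
  case (Suc m)
  have "moves_sum u (Suc n) (Suc n) =
      (\<Sum>b\<in>{1..Suc n}. \<Sum>\<sigma>\<in>perms n. u ^ chi (Suc n) (\<sigma> \<circ> transpose (Suc n) b) (Suc n))"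
    unfolding moves_sum_def by (rule sum_perms_Suc)
  also have "\<dots> = (\<Sum>b\<in>{1..Suc n}. if b = Suc n then u * fact n else u * moves_sum u n b)"
    \<comment> \<open>rewrite before simp substitutes b = n+1, which would collapse the transposition to id\<close>
    by (intro sum.cong refl) (simp only: Suc moves_sum_comp_transpose, simp)
  also have "\<dots> = u * fact n + (\<Sum>b\<in>{1..n}. u * moves_sum u n b)"
    by (simp add: atLeastAtMostSuc_conv)
  finally show ?thesis
    by (simp add: moves_total_def sum_distrib_left)
qed

lemma moves_total_Suc:
  "moves_total u (Suc n) = (of_nat n + u) * moves_total u n + u * fact (Suc n)"
proof -
  have "moves_total u (Suc n) = (\<Sum>p\<in>{1..n}. moves_sum u (Suc n) p) + moves_sum u (Suc n) (Suc n)"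
    by (simp add: moves_total_def)
  also have "(\<Sum>p\<in>{1..n}. moves_sum u (Suc n) p) = (\<Sum>p\<in>{1..n}. u * fact n + of_nat n * moves_sum u n p)"
    by (rule sum.cong) (simp_all add: moves_sum_Suc)
  finally show ?thesis
    by (simp add: moves_sum_Suc_top sum.distrib moves_total_def sum_distrib_left algebra_simps)
qed

end

lemma moves_total_closed_form:
  fixes u :: "'a::field_char_0"
  assumes "u \<noteq> 2"
  shows "moves_total u n = u / (2 - u) * (fact (Suc n) - pochhammer u n)"
proof (induction n)
  case 0
  then show ?case
    by (simp add: moves_total_def)
next
  case (Suc n)
  have "2 - u \<noteq> 0"
    using assms by simp
  then show ?case
    unfolding moves_total_Suc Suc pochhammer_rec' fact_Suc[of "Suc n"]
    by (simp add: field_simps)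
qed

lemma Fser_nth: "fps_nth (Fser u) n = moves_total u n / fact n"
  by (simp add: Fser_def moves_total_def moves_sum_def)

lemma Gser_nth:
  "fps_nth (Gser u) 0 = 0"
  "fps_nth (Gser u) (Suc n) = u * (fact n + moves_total u n) / fact (Suc n)"
  by (simp_all add: Gser_def moves_sum_def[symmetric] moves_sum_Suc_top algebra_simps del: fact_Suc)

lemma Gser_nth_Suc_closed_form:
  fixes u :: "'a::field_char_0"
  assumes "u \<noteq> 2"
  shows "fps_nth (Gser u) (Suc n) =
    u^2 / (2 - u) * (1 - pochhammer u n / fact (Suc n)) + u / of_nat (Suc n)"
proof -
  have regroup: "u * (f + u / (2 - u) * (F - P)) / F = u^2 / (2 - u) * (1 - P / F) + u * f / F"
    if "F \<noteq> 0" for f F P :: 'a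
    using that assms by (simp add: field_simps power2_eq_square)
  have "u * fact n / fact (Suc n) = u / (of_nat (Suc n) :: 'a)"
    by (simp del: of_nat_Suc)
  then show ?thesis
    by (simp only: Gser_nth moves_total_closed_form[OF assms] regroup[OF fact_nonzero])
qed

lemma Fser_closed_form:
  assumes "u \<noteq> 2"
  shows "Fser u = fps_const (u / (2 - u)) * (binser (-2) - binser (-u))"
proof (rule fps_ext)
  fix n
  show "fps_nth (Fser u) n = fps_nth (fps_const (u / (2 - u)) * (binser (-2) - binser (-u))) n"
    by (simp add: Fser_nth moves_total_closed_form[OF assms] binser_nth pochhammer_two
        diff_divide_distrib[symmetric] del: fact_Suc)
qed

lemma Gser_closed_form:
  assumes "u \<noteq> 2" "u \<noteq> 1"
  shows "Gser u = fps_const (u^2 / (2 - u)) * (inverse (1 - fps_X) + fps_const (1 / (1 - u)) * binser (1 - u))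
    - fps_const (u^2 / (1 - u)) - fps_const u * (fps_ln 1 oo (- fps_X))" (is "_ = ?rhs")
proof (rule fps_ext)
  fix n
  have nonzero: "2 - u \<noteq> 0" "1 - u \<noteq> 0"
    using assms by simp_all
  show "fps_nth (Gser u) n = fps_nth ?rhs n"
  proof (cases n)
    case 0
    have "1 + 1 / (1 - u) = (2 - u) / (1 - u)"
      using nonzero by (simp add: field_simps)
    with 0 nonzero show ?thesis
      by (simp add: Gser_nth fps_inverse_one_minus_fps_X binser_nth ln_one_minus_X_nth)
  next
    case (Suc k)
    have flip: "1 / (1 - u) * ((u - 1) * z) = - z" for z
      using nonzero by (simp add: field_simps)
    have "fps_nth ?rhs (Suc k) =
        u^2 / (2 - u) * (1 + 1 / (1 - u) * ((u - 1) * (pochhammer u k / fact (Suc k)))) + u / of_nat (Suc k)"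
      by (simp add: fps_inverse_one_minus_fps_X binser_nth ln_one_minus_X_nth pochhammer_rec
          del: of_nat_Suc fact_Suc)
    also have "\<dots> = fps_nth (Gser u) (Suc k)"
      unfolding flip Gser_nth_Suc_closed_form[OF assms(1)] by simp
    finally show ?thesis
      using Suc by simp
  qed
qed

theorem mainTheorem8:
  fixes u :: "'a::field_char_0"
  assumes "u \<noteq> 2"
  shows "Fser u = fps_const (u / (2 - u)) * (binser (-2) - binser (-u)) \<and>
         (u \<noteq> 1 \<longrightarrow>
          Gser u = fps_const (u^2 / (2 - u)) * (inverse (1 - fps_X) + fps_const (1 / (1 - u)) * binser (1 - u))
                   - fps_const (u^2 / (1 - u)) - fps_const u * (fps_ln 1 oo (- fps_X)))"
  using Fser_closed_form Gser_closed_form assms by blast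

end
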